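(* Let $\tilde{\mathbb{P}}$ be a probability measure under which $X_1,\ldots,X_n$ are i.i.d. positive-integer-valued random variables such that, for each $i$, the events $\{p\mid X_i\}$, $p\in\mathcal{P}$, $p\le n$, are mutually independent with $\tilde{\mathbb{P}}(p\mid X_i)=1/p$. For a prime $p$ let $Y_p:=\#\{1\le i\le n: p\mid X_i\}$, and for $k_1<k_2$ let $S(k_1,k_2):=\{p\in\mathcal{P}:k_1<p\le k_2\}$. Then for every $\epsilon>0$, for all sufficiently large $k$ and all sufficiently large $n$ (depending on $k,\epsilon$), \[ \frac{1}{n}\log\tilde{\mathbb{P}}\left(\sum_{p\in S(k,n)}Y_{p}^{2}>n^{2}\epsilon\right)\leq-\frac{\epsilon}{8}\log(k)+4. \] Consequently, for every $\epsilon>0$, \[ \limsup_{k\to\infty}\limsup_{n\to\infty}\frac{1}{n}\log\tilde{\mathbb{P}}\left(\sum_{p\in S(k,n)}Y_{p}^{2}>n^{2}\epsilon\right)=-\infty. \]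
   Context: $\mathcal{P}$ denotes the set of primes. *)

theory Defs
  imports "HOL-Probability.Probability" "HOL-Computational_Algebra.Primes"
begin

definition tilde_model :: "nat \<Rightarrow> 'a measure \<Rightarrow> (nat \<Rightarrow> 'a \<Rightarrow> nat) \<Rightarrow> bool" where
  "tilde_model n M X \<longleftrightarrow>
     prob_space M \<and>
     prob_space.indep_vars M (\<lambda>_. count_space UNIV) X {1..n} \<and>
     (\<forall>i\<in>{1..n}. distr M (count_space UNIV) (X i) = distr M (count_space UNIV) (X 1)) \<and>
     (\<forall>i\<in>{1..n}. AE \<omega> in M. X i \<omega> \<ge> 1) \<and>
     (\<forall>i\<in>{1..n}.
        prob_space.indep_events M (\<lambda>p. {\<omega>\<in>space M. p dvd X i \<omega>}) {p. prime p \<and> p \<le> n} \<and>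
        (\<forall>p. prime p \<and> p \<le> n \<longrightarrow> measure M {\<omega>\<in>space M. p dvd X i \<omega>} = 1 / real p))"

definition Ycount :: "nat \<Rightarrow> (nat \<Rightarrow> 'a \<Rightarrow> nat) \<Rightarrow> nat \<Rightarrow> 'a \<Rightarrow> nat" where
  "Ycount n X p \<omega> = card {i\<in>{1..n}. p dvd X i \<omega>}"

definition Sprimes :: "nat \<Rightarrow> nat \<Rightarrow> nat set" where
  "Sprimes k1 k2 = {p. prime p \<and> k1 < p \<and> p \<le> k2}"

definition big_event :: "nat \<Rightarrow> nat \<Rightarrow> real \<Rightarrow> 'a measure \<Rightarrow> (nat \<Rightarrow> 'a \<Rightarrow> nat) \<Rightarrow> 'a set" where
  "big_event n k \<epsilon> M X =
     {\<omega>\<in>space M. (\<Sum>p\<in>Sprimes k n. real (Ycount n X p \<omega>) ^ 2) > real n ^ 2 * \<epsilon>}"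

definition eln :: "real \<Rightarrow> ereal" where
  "eln x = (if x = 0 then -\<infinity> else ereal (ln x))"

end

theory Submission
  imports Defs "HOL-Real_Asymp.Real_Asymp"
begin

(* Proof idea (an exponential Chebyshev/Chernoff bound).
   Put S = S(k,n), lam = ln k / 8 and C = exp (lam + 1).  Pointwise,
     exp (lam * Y^2 / n) <= exp (lam C Y / p) + exp (- C n / p) * exp ((lam + 1) Y)
   (split according to whether Y <= C n / p), so on the event sum Y_p^2 > n^2 eps the
   product over p in S of the right-hand sides is at least exp (lam n eps).  By independence
   the expectation of such a product is the product of moment generating functions of the
   binomial variables Y_p ~ Bin(n, 1/p), and each factor is at most 2 exp (2 lam C n / p^2).
   Since sum_{p > k} 1/p^2 <= 1/k and lam C <= k/2 for large k, Markov's inequality gives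
     P (sum Y_p^2 > n^2 eps) <= exp (n (ln 2 + 1 - eps lam)),
   which is the first claim; the double limsup statement follows as the bound tends to -oo. *)

definition binom_mgf :: "nat \<Rightarrow> nat \<Rightarrow> real \<Rightarrow> real" where
  "binom_mgf n p \<alpha> = (1 + (exp \<alpha> - 1) / real p) ^ n"

lemma (in prob_space) indep_events_prod_indicator:
  assumes ind: "indep_events F I" and TI: "T \<subseteq> I" and fin: "finite T"
  shows "integrable M (\<lambda>\<omega>. (\<Prod>p\<in>T. indicator (F p) \<omega>) :: real)"
    and "(\<integral>\<omega>. (\<Prod>p\<in>T. indicator (F p) \<omega>) \<partial>M) = (\<Prod>p\<in>T. prob (F p))"
proof -
  have ev: "\<And>p. p \<in> T \<Longrightarrow> F p \<in> events" using ind TI by (auto simp: indep_events_def)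
  show "integrable M (\<lambda>\<omega>. (\<Prod>p\<in>T. indicator (F p) \<omega>) :: real)"
  proof (rule integrable_const_bound[where B=1])
    show "AE x in M. norm ((\<Prod>p\<in>T. indicator (F p) x) :: real) \<le> 1"
      by (intro AE_I2) (auto simp: abs_prod indicator_def intro!: prod_le_1)
    show "(\<lambda>\<omega>. (\<Prod>p\<in>T. indicator (F p) \<omega>) :: real) \<in> borel_measurable M"
      using ev by (intro borel_measurable_prod) auto
  qed
  show "(\<integral>\<omega>. (\<Prod>p\<in>T. indicator (F p) \<omega>) \<partial>M) = (\<Prod>p\<in>T. prob (F p))"
  proof (cases "T = {}")
    case True then show ?thesis by (simp add: prob_space)
  next
    case False
    have "(\<Prod>p\<in>T. indicator (F p) \<omega>) = (indicator (\<Inter>p\<in>T. F p) \<omega> :: real)" for \<omega>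
      using fin by (induction T rule: finite_induct) (auto simp: indicator_def)
    moreover have "(\<Inter>p\<in>T. F p) \<in> events" using ev False fin by (intro sets.finite_INT) auto
    ultimately have "(\<integral>\<omega>. (\<Prod>p\<in>T. indicator (F p) \<omega>) \<partial>M) = prob (\<Inter>p\<in>T. F p)"
      by simp
    also have "\<dots> = (\<Prod>p\<in>T. prob (F p))"
      using ind TI False fin by (auto simp: indep_events_def)
    finally show ?thesis .
  qed
qed

(* Consequently the expectation of prod (1 + c p * 1_{F p}) factorizes (expand the product
   into a sum over subsets); this computes the moment generating function of a single X_i. *)
lemma (in prob_space) indep_events_prod_integral:
  fixes c :: "'i \<Rightarrow> real"
  assumes ind: "indep_events F I" and JI: "J \<subseteq> I" and fin: "finite J"
  shows "(\<integral>\<omega>. (\<Prod>p\<in>J. 1 + c p * indicator (F p) \<omega>) \<partial>M) = (\<Prod>p\<in>J. 1 + c p * prob (F p))"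
proof -
  note moments = indep_events_prod_indicator[OF ind order_trans[OF _ JI] finite_subset[OF _ fin]]
  have expand: "(\<Prod>p\<in>J. 1 + c p * indicator (F p) \<omega>) =
        (\<Sum>T\<in>Pow J. (\<Prod>p\<in>T. c p) * (\<Prod>p\<in>T. indicator (F p) \<omega>))" for \<omega>
    using prod_add[OF fin, of "\<lambda>p. c p * indicator (F p) \<omega>" "\<lambda>_. 1"]
    by (simp add: add.commute prod.distrib)
  have "(\<integral>\<omega>. (\<Prod>p\<in>J. 1 + c p * indicator (F p) \<omega>) \<partial>M) =
     (\<Sum>T\<in>Pow J. (\<Prod>p\<in>T. c p) * (\<integral>\<omega>. (\<Prod>p\<in>T. indicator (F p) \<omega>) \<partial>M))"
    unfolding expand using moments(1) fin by (simp add: Bochner_Integration.integral_sum)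
  also have "\<dots> = (\<Sum>T\<in>Pow J. (\<Prod>p\<in>T. c p * prob (F p)) * (\<Prod>p\<in>J - T. 1))"
    using moments(2) by (simp add: prod.distrib)
  also have "\<dots> = (\<Prod>p\<in>J. c p * prob (F p) + 1)"
    by (rule prod_add[OF fin, symmetric])
  finally show ?thesis by (simp add: add.commute)
qed

lemma card_filter_sum: "finite A \<Longrightarrow> real (card {i\<in>A. P i}) = (\<Sum>i\<in>A. of_bool (P i))"
  by (simp add: sum.inter_filter[symmetric] Int_def)

lemma Ycount_eq_sum: "real (Ycount n X p \<omega>) = (\<Sum>i\<in>{1..n}. of_bool (p dvd X i \<omega>))"
  unfolding Ycount_def by (rule card_filter_sum) simp

lemma Ycount_le: "real (Ycount n X p \<omega>) \<le> real n"
proof -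
  have "Ycount n X p \<omega> \<le> card {1..n}" unfolding Ycount_def by (intro card_mono) auto
  then show ?thesis by simp
qed

lemma tilde_model_facts:
  assumes "tilde_model n M X"
  shows "prob_space M" "prob_space.indep_vars M (\<lambda>_. count_space UNIV) X {1..n}"
    "\<And>i. i \<in> {1..n} \<Longrightarrow> X i \<in> measurable M (count_space UNIV)"
    "\<And>i. i \<in> {1..n} \<Longrightarrow> prob_space.indep_events M (\<lambda>p. {\<omega>\<in>space M. p dvd X i \<omega>}) {p. prime p \<and> p \<le> n}"
    "\<And>i p. i \<in> {1..n} \<Longrightarrow> prime p \<Longrightarrow> p \<le> n \<Longrightarrow> measure M {\<omega>\<in>space M. p dvd X i \<omega>} = 1 / real p"
  using assms unfolding tilde_model_def
  by (auto simp: prob_space.indep_vars_def)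

lemma mgf_single_draw:
  assumes tm: "tilde_model n M X" and i: "i \<in> {1..n}" and S: "S \<subseteq> {p. prime p \<and> p \<le> n}"
  shows "(\<integral>\<omega>. exp (\<Sum>p\<in>S. \<alpha> p * of_bool (p dvd X i \<omega>)) \<partial>M) = (\<Prod>p\<in>S. 1 + (exp (\<alpha> p) - 1) / real p)"
proof -
  interpret prob_space M using tilde_model_facts(1)[OF tm] .
  have fS: "finite S" using S by (rule finite_subset) auto
  have "(\<integral>\<omega>. exp (\<Sum>p\<in>S. \<alpha> p * of_bool (p dvd X i \<omega>)) \<partial>M) =
      (\<integral>\<omega>. (\<Prod>p\<in>S. 1 + (exp (\<alpha> p) - 1) * indicator {\<omega>\<in>space M. p dvd X i \<omega>} \<omega>) \<partial>M)"
    unfolding exp_sum[OF fS]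
    by (intro Bochner_Integration.integral_cong prod.cong) (auto simp: indicator_def)
  also have "\<dots> = (\<Prod>p\<in>S. 1 + (exp (\<alpha> p) - 1) * prob {\<omega>\<in>space M. p dvd X i \<omega>})"
    by (rule indep_events_prod_integral[OF tilde_model_facts(4)[OF tm i] S fS])
  also have "\<dots> = (\<Prod>p\<in>S. 1 + (exp (\<alpha> p) - 1) / real p)"
    using S tilde_model_facts(5)[OF tm i] by (intro prod.cong) auto
  finally show ?thesis .
qed

(* Joint moment generating function of (Y_p)_{p in S}: since the X_i are independent and,
   for each i, the events (p dvd X_i) are independent of probability 1/p, it is the product
   of the binomial moment generating functions. *)
lemma joint_mgf_Ycount:
  assumes tm: "tilde_model n M X" and S: "S \<subseteq> {p. prime p \<and> p \<le> n}"
  shows "integrable M (\<lambda>\<omega>. exp (\<Sum>p\<in>S. \<alpha> p * real (Ycount n X p \<omega>)))"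
    and "(\<integral>\<omega>. exp (\<Sum>p\<in>S. \<alpha> p * real (Ycount n X p \<omega>)) \<partial>M) = (\<Prod>p\<in>S. binom_mgf n p (\<alpha> p))"
proof -
  interpret prob_space M using tilde_model_facts(1)[OF tm] .
  define \<phi> where "\<phi> x = (\<Sum>p\<in>S. \<alpha> p * of_bool (p dvd x))" for x :: nat
  have as_prod: "exp (\<Sum>p\<in>S. \<alpha> p * real (Ycount n X p \<omega>)) = (\<Prod>i\<in>{1..n}. exp (\<phi> (X i \<omega>)))" for \<omega>
  proof -
    have "(\<Sum>p\<in>S. \<alpha> p * real (Ycount n X p \<omega>)) = (\<Sum>p\<in>S. \<Sum>i\<in>{1..n}. \<alpha> p * of_bool (p dvd X i \<omega>))"
      by (simp only: Ycount_eq_sum sum_distrib_left)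
    also have "\<dots> = (\<Sum>i\<in>{1..n}. \<phi> (X i \<omega>))"
      unfolding \<phi>_def by (rule sum.swap)
    finally show ?thesis by (simp add: exp_sum)
  qed
  have ind: "indep_vars (\<lambda>_. borel) (\<lambda>i \<omega>. exp (\<phi> (X i \<omega>))) {1..n}"
    by (rule indep_vars_compose2[OF tilde_model_facts(2)[OF tm]]) simp
  have intg: "integrable M (\<lambda>\<omega>. exp (\<phi> (X i \<omega>)))" if "i \<in> {1..n}" for i
  proof (rule integrable_const_bound[where B="exp (\<Sum>p\<in>S. \<bar>\<alpha> p\<bar>)"])
    have "\<phi> x \<le> (\<Sum>p\<in>S. \<bar>\<alpha> p\<bar>)" for x unfolding \<phi>_def by (intro sum_mono) auto
    then show "AE x in M. norm (exp (\<phi> (X i x))) \<le> exp (\<Sum>p\<in>S. \<bar>\<alpha> p\<bar>)" by simp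
    show "(\<lambda>\<omega>. exp (\<phi> (X i \<omega>))) \<in> borel_measurable M"
      by (rule measurable_compose[OF tilde_model_facts(3)[OF tm that]]) simp
  qed
  show "integrable M (\<lambda>\<omega>. exp (\<Sum>p\<in>S. \<alpha> p * real (Ycount n X p \<omega>)))"
    unfolding as_prod by (rule indep_vars_integrable[OF _ ind intg]) auto
  define c where "c = (\<Prod>p\<in>S. 1 + (exp (\<alpha> p) - 1) / real p)"
  have single: "(\<integral>\<omega>. exp (\<phi> (X i \<omega>)) \<partial>M) = c" if "i \<in> {1..n}" for i
    unfolding \<phi>_def c_def by (rule mgf_single_draw[OF tm that S])
  have "(\<integral>\<omega>. exp (\<Sum>p\<in>S. \<alpha> p * real (Ycount n X p \<omega>)) \<partial>M) = (\<Prod>i\<in>{1..n}. \<integral>\<omega>. exp (\<phi> (X i \<omega>)) \<partial>M)"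
    unfolding as_prod by (rule indep_vars_lebesgue_integral[OF _ ind intg]) auto
  also have "\<dots> = c ^ n" using single by simp
  finally show "(\<integral>\<omega>. exp (\<Sum>p\<in>S. \<alpha> p * real (Ycount n X p \<omega>)) \<partial>M) = (\<Prod>p\<in>S. binom_mgf n p (\<alpha> p))"
    unfolding c_def binom_mgf_def by (simp add: prod_power_distrib)
qed

lemma prod_if_mem:
  fixes g h :: "'a \<Rightarrow> 'b::comm_monoid_mult"
  assumes "finite S" "T \<subseteq> S"
  shows "(\<Prod>p\<in>S. if p \<in> T then g p else h p) = (\<Prod>p\<in>T. g p) * (\<Prod>p\<in>S - T. h p)"
proof -
  have "S \<inter> {p. p \<in> T} = T" "S \<inter> - {p. p \<in> T} = S - T" using assms(2) by auto
  then show ?thesis using prod.If_cases[OF assms(1), of "\<lambda>p. p \<in> T" g h] by simp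
qed

(* Expectation of a product of two-term exponential mixtures in the Y_p: expand the product,
   apply the joint moment generating function to every term, and recombine. *)
lemma expectation_prod_exp_mixture:
  fixes A B a b :: "nat \<Rightarrow> real"
  assumes tm: "tilde_model n M X" and S: "S \<subseteq> {p. prime p \<and> p \<le> n}"
  defines "G \<equiv> \<lambda>\<omega>. \<Prod>p\<in>S. A p * exp (a p * real (Ycount n X p \<omega>)) + B p * exp (b p * real (Ycount n X p \<omega>))"
  shows "integrable M G"
    and "(\<integral>\<omega>. G \<omega> \<partial>M) = (\<Prod>p\<in>S. A p * binom_mgf n p (a p) + B p * binom_mgf n p (b p))"
proof -
  have fS: "finite S" using S by (rule finite_subset) auto
  define \<beta> where "\<beta> T p = (if p \<in> T then a p else b p)" for T and p :: nat
  define K where "K T = (\<Prod>p\<in>T. A p) * (\<Prod>p\<in>S - T. B p)" for T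
  have expand: "G \<omega> = (\<Sum>T\<in>Pow S. K T * exp (\<Sum>p\<in>S. \<beta> T p * real (Ycount n X p \<omega>)))" for \<omega>
  proof -
    have "exp (\<Sum>p\<in>S. \<beta> T p * real (Ycount n X p \<omega>))
        = (\<Prod>p\<in>T. exp (a p * real (Ycount n X p \<omega>))) * (\<Prod>p\<in>S - T. exp (b p * real (Ycount n X p \<omega>)))"
      if "T \<subseteq> S" for T
    proof -
      have "exp (\<Sum>p\<in>S. \<beta> T p * real (Ycount n X p \<omega>))
          = (\<Prod>p\<in>S. if p \<in> T then exp (a p * real (Ycount n X p \<omega>)) else exp (b p * real (Ycount n X p \<omega>)))"
        unfolding exp_sum[OF fS] \<beta>_def by (intro prod.cong) auto
      then show ?thesis by (simp only: prod_if_mem[OF fS that])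
    qed
    then show ?thesis
      unfolding G_def prod_add[OF fS] K_def by (intro sum.cong) (auto simp: prod.distrib)
  qed
  show "integrable M G"
    unfolding expand using joint_mgf_Ycount(1)[OF tm S] by (intro Bochner_Integration.integrable_sum integrable_mult_right) auto
  have "(\<integral>\<omega>. G \<omega> \<partial>M) = (\<Sum>T\<in>Pow S. K T * (\<Prod>p\<in>S. binom_mgf n p (\<beta> T p)))"
    unfolding expand using joint_mgf_Ycount[OF tm S] by (subst Bochner_Integration.integral_sum) auto
  also have "\<dots> = (\<Sum>T\<in>Pow S. (\<Prod>p\<in>T. A p * binom_mgf n p (a p)) * (\<Prod>p\<in>S - T. B p * binom_mgf n p (b p)))"
  proof (rule sum.cong[OF refl])
    fix T assume "T \<in> Pow S"
    have "(\<Prod>p\<in>S. binom_mgf n p (\<beta> T p))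
        = (\<Prod>p\<in>S. if p \<in> T then binom_mgf n p (a p) else binom_mgf n p (b p))"
      unfolding \<beta>_def by (intro prod.cong) auto
    also have "\<dots> = (\<Prod>p\<in>T. binom_mgf n p (a p)) * (\<Prod>p\<in>S - T. binom_mgf n p (b p))"
      using \<open>T \<in> Pow S\<close> by (intro prod_if_mem[OF fS]) auto
    finally have "(\<Prod>p\<in>S. binom_mgf n p (\<beta> T p)) = (\<Prod>p\<in>T. binom_mgf n p (a p)) * (\<Prod>p\<in>S - T. binom_mgf n p (b p))" .
    then show "K T * (\<Prod>p\<in>S. binom_mgf n p (\<beta> T p)) = (\<Prod>p\<in>T. A p * binom_mgf n p (a p)) * (\<Prod>p\<in>S - T. B p * binom_mgf n p (b p))"
      unfolding K_def by (simp add: prod.distrib)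
  qed
  also have "\<dots> = (\<Prod>p\<in>S. A p * binom_mgf n p (a p) + B p * binom_mgf n p (b p))"
    by (rule prod_add[OF fS, symmetric])
  finally show "(\<integral>\<omega>. G \<omega> \<partial>M) = (\<Prod>p\<in>S. A p * binom_mgf n p (a p) + B p * binom_mgf n p (b p))" .
qed

lemma binom_mgf_nonneg:
  assumes "p \<ge> 1"
  shows "binom_mgf n p \<alpha> \<ge> 0"
proof -
  have p1: "real p \<ge> 1" using assms by simp
  then have "-1 \<le> (exp \<alpha> - 1) / real p \<longleftrightarrow> -1 * real p \<le> exp \<alpha> - 1"
    by (intro pos_le_divide_eq) linarith
  moreover have "-1 * real p \<le> exp \<alpha> - 1" using p1 exp_gt_zero[of \<alpha>] by linarith
  ultimately have "-1 \<le> (exp \<alpha> - 1) / real p" by blast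
  then show ?thesis unfolding binom_mgf_def by simp
qed

lemma binom_mgf_le_exp:
  assumes "p \<ge> 1"
  shows "binom_mgf n p \<alpha> \<le> exp (real n * ((exp \<alpha> - 1) / real p))"
proof -
  have "0 \<le> 1 + (exp \<alpha> - 1) / real p"
    using binom_mgf_nonneg[OF assms, of 1 \<alpha>] by (simp add: binom_mgf_def)
  then have "binom_mgf n p \<alpha> \<le> exp ((exp \<alpha> - 1) / real p) ^ n"
    unfolding binom_mgf_def by (intro power_mono) (simp_all add: exp_ge_add_one_self add.commute)
  also have "\<dots> = exp (real n * ((exp \<alpha> - 1) / real p))"
    by (rule exp_of_nat_mult[symmetric])
  finally show ?thesis .
qed

(* Telescoping bound for the tail of sum 1/m^2 over any set of integers in (k, n]. *)
lemma sum_inverse_squares_le: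
  assumes "k \<ge> 1" "finite S" "S \<subseteq> {p. k < p \<and> p \<le> n}"
  shows "(\<Sum>p\<in>S. 1 / (real p)^2) \<le> 1 / real k"
proof -
  have telescope: "(\<Sum>m\<in>{Suc k..N}. 1 / (real m)^2) \<le> 1 / real k - 1 / real N" if "N \<ge> k" for N
    using that
  proof (induction N rule: dec_induct)
    case (step N)
    have N1: "real N \<ge> 1" using step assms by simp
    have "1 / (1 + real N)^2 \<le> 1 / (real N * (1 + real N))"
      using N1 by (intro divide_left_mono) (auto simp: power2_eq_square intro!: mult_right_mono)
    also have "\<dots> = 1 / real N - 1 / (1 + real N)"
      using N1 by (simp add: field_simps)
    finally have last_term: "1 / (1 + real N)^2 \<le> 1 / real N - 1 / (1 + real N)" .
    have "(\<Sum>m\<in>{Suc k..Suc N}. 1 / (real m)^2) = (\<Sum>m\<in>{Suc k..N}. 1 / (real m)^2) + 1 / (1 + real N)^2"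
      using step(1) by (simp add: sum.cl_ivl_Suc)
    then show ?case using step.IH last_term by (simp only: of_nat_Suc)
  qed simp
  have "(\<Sum>p\<in>S. 1 / (real p)^2) \<le> (\<Sum>m\<in>{Suc k..n}. 1 / (real m)^2)"
    using assms by (intro sum_mono2) auto
  also have "\<dots> \<le> 1 / real k"
  proof (cases "k \<le> n")
    case True
    have "0 \<le> 1 / real n" by simp
    with telescope[OF True] show ?thesis by linarith
  qed simp
  finally show ?thesis .
qed

(* Splitting exp (lam y^2 / n) at the threshold y = C n q: below it the exponent is at most
   lam C q y, above it the penalty exp (- C n q) pays for the linear bound lam y^2/n <= lam y. *)
lemma exp_square_split:
  fixes y lam C q nn :: real
  assumes "0 \<le> y" "y \<le> nn" "nn > 0" "lam \<ge> 0" "C > 0" "q > 0"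
  shows "exp (lam * y^2 / nn) \<le> exp (lam * C * q * y) + exp (- (C * nn * q)) * exp ((lam + 1) * y)"
proof (cases "y \<le> C * nn * q")
  case True
  have "y^2 / nn \<le> C * q * y"
  proof -
    have "y * y \<le> (C * nn * q) * y" using True assms by (intro mult_right_mono) auto
    then show ?thesis using assms by (simp add: field_simps power2_eq_square)
  qed
  then have "lam * (y^2 / nn) \<le> lam * (C * q * y)" using assms
    by (intro mult_left_mono) auto
  then have "lam * y^2 / nn \<le> lam * C * q * y" by (simp add: mult.assoc)
  then have "exp (lam * y^2 / nn) \<le> exp (lam * C * q * y)" by simp
  moreover have "0 \<le> exp (- (C * nn * q)) * exp ((lam + 1) * y)" by simp
  ultimately show ?thesis by linarith
next
  case False
  have "y^2 / nn \<le> y"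
  proof -
    have "y * y \<le> nn * y" using assms by (intro mult_right_mono) auto
    then show ?thesis using assms by (simp add: field_simps power2_eq_square)
  qed
  then have "lam * (y^2 / nn) \<le> lam * y" using assms
    by (intro mult_left_mono) auto
  then have "lam * y^2 / nn \<le> - (C * nn * q) + (lam + 1) * y"
    using False by (simp add: algebra_simps)
  then have "exp (lam * y^2 / nn) \<le> exp (- (C * nn * q)) * exp ((lam + 1) * y)"
    by (simp add: exp_add[symmetric])
  moreover have "0 \<le> exp (lam * C * q * y)" by simp
  ultimately show ?thesis by linarith
qed

lemma exp_sum_squares_le_prod:
  fixes y :: "nat \<Rightarrow> real"
  assumes "finite S" "\<And>p. p \<in> S \<Longrightarrow> 0 \<le> y p \<and> y p \<le> nn \<and> p > 0" "nn > 0" "lam \<ge> 0" "C > 0"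
  shows "exp (lam * (\<Sum>p\<in>S. y p ^ 2) / nn)
         \<le> (\<Prod>p\<in>S. exp (lam * C / real p * y p) + exp (- (C * nn / real p)) * exp ((lam + 1) * y p))"
proof -
  have "exp (lam * (\<Sum>p\<in>S. y p ^ 2) / nn) = (\<Prod>p\<in>S. exp (lam * y p ^ 2 / nn))"
    by (simp add: exp_sum[OF assms(1), symmetric] sum_distrib_left sum_divide_distrib)
  also have "\<dots> \<le> (\<Prod>p\<in>S. exp (lam * C / real p * y p) + exp (- (C * nn / real p)) * exp ((lam + 1) * y p))"
  proof (intro prod_mono conjI)
    fix p assume "p \<in> S"
    then show "exp (lam * y p ^ 2 / nn) \<le> exp (lam * C / real p * y p) + exp (- (C * nn / real p)) * exp ((lam + 1) * y p)"
      using exp_square_split[of "y p" nn lam C "1 / real p"] assms by (simp add: field_simps)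
  qed simp
  finally show ?thesis .
qed

lemma big_event_mixture_large:
  assumes \<omega>: "\<omega> \<in> big_event n k \<epsilon> M X" and n1: "n \<ge> 1" and lam: "lam \<ge> 0" and C: "C > 0"
  shows "exp (lam * real n * \<epsilon>) \<le> (\<Prod>p\<in>Sprimes k n. exp (lam * C / real p * real (Ycount n X p \<omega>))
           + exp (- (C * real n / real p)) * exp ((lam + 1) * real (Ycount n X p \<omega>)))"
proof -
  define S where "S = Sprimes k n"
  have SP: "S \<subseteq> {p. prime p \<and> p \<le> n}" unfolding S_def Sprimes_def by auto
  have fS: "finite S" using SP by (rule finite_subset) auto
  have "real n ^ 2 * \<epsilon> < (\<Sum>p\<in>S. real (Ycount n X p \<omega>) ^ 2)"
    using \<omega> unfolding big_event_def S_def by auto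
  then have "real n * \<epsilon> \<le> (\<Sum>p\<in>S. real (Ycount n X p \<omega>) ^ 2) / real n"
    using n1 by (simp add: field_simps power2_eq_square)
  then have "lam * (real n * \<epsilon>) \<le> lam * ((\<Sum>p\<in>S. real (Ycount n X p \<omega>) ^ 2) / real n)"
    using lam by (rule mult_left_mono)
  then have "lam * real n * \<epsilon> \<le> lam * (\<Sum>p\<in>S. real (Ycount n X p \<omega>) ^ 2) / real n"
    by (simp add: mult.assoc)
  also have "exp \<dots> \<le> (\<Prod>p\<in>S. exp (lam * C / real p * real (Ycount n X p \<omega>))
           + exp (- (C * real n / real p)) * exp ((lam + 1) * real (Ycount n X p \<omega>)))"
  proof (rule exp_sum_squares_le_prod[OF fS _ _ lam C])
    show "0 \<le> real (Ycount n X p \<omega>) \<and> real (Ycount n X p \<omega>) \<le> real n \<and> 0 < p" if "p \<in> S" for p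
      using that SP Ycount_le prime_gt_0_nat by auto
  qed (use n1 in simp)
  finally show ?thesis unfolding S_def by simp
qed

(* Chernoff step: Markov's inequality applied to the product of mixtures, whose expectation
   is computed by independence. *)
lemma big_event_le_mixture_moment:
  assumes tm: "tilde_model n M X" and n1: "n \<ge> 1" and lam: "lam \<ge> 0" and C: "C > 0"
  shows "measure M (big_event n k \<epsilon> M X) \<le> exp (- (lam * real n * \<epsilon>)) *
           (\<Prod>p\<in>Sprimes k n. binom_mgf n p (lam * C / real p)
                              + exp (- (C * real n / real p)) * binom_mgf n p (lam + 1))"
proof -
  interpret prob_space M using tilde_model_facts(1)[OF tm] .
  define S where "S = Sprimes k n"
  define G where "G \<omega> = (\<Prod>p\<in>S. exp (lam * C / real p * real (Ycount n X p \<omega>))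
                    + exp (- (C * real n / real p)) * exp ((lam + 1) * real (Ycount n X p \<omega>)))" for \<omega>
  have SP: "S \<subseteq> {p. prime p \<and> p \<le> n}" unfolding S_def Sprimes_def by auto
  note mixture = expectation_prod_exp_mixture[OF tm SP, where A="\<lambda>_. 1" and a="\<lambda>p. lam * C / real p"
      and B="\<lambda>p. exp (- (C * real n / real p))" and b="\<lambda>_. lam + 1"]
  have Gint: "integrable M G" using mixture(1) unfolding G_def by simp
  have G0: "G \<omega> \<ge> 0" for \<omega> unfolding G_def by (intro prod_nonneg) auto
  have "big_event n k \<epsilon> M X \<subseteq> {\<omega>\<in>space M. G \<omega> \<ge> exp (lam * real n * \<epsilon>)}"
  proof safe
    fix \<omega> assume \<omega>: "\<omega> \<in> big_event n k \<epsilon> M X"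
    then show "\<omega> \<in> space M" unfolding big_event_def by auto
    show "exp (lam * real n * \<epsilon>) \<le> G \<omega>"
      unfolding G_def S_def by (rule big_event_mixture_large[OF \<omega> n1 lam C])
  qed
  moreover have "{\<omega>\<in>space M. G \<omega> \<ge> exp (lam * real n * \<epsilon>)} \<in> events"
    using borel_measurable_integrable[OF Gint] by measurable
  ultimately have "measure M (big_event n k \<epsilon> M X) \<le> measure M {\<omega>\<in>space M. G \<omega> \<ge> exp (lam * real n * \<epsilon>)}"
    by (rule finite_measure_mono)
  also have "\<dots> \<le> (\<integral>\<omega>. G \<omega> \<partial>M) / exp (lam * real n * \<epsilon>)"
    using Gint G0 by (intro integral_Markov_inequality_measure[where A="space M"]) auto
  also have "(\<integral>\<omega>. G \<omega> \<partial>M) = (\<Prod>p\<in>S. binom_mgf n p (lam * C / real p)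
                              + exp (- (C * real n / real p)) * binom_mgf n p (lam + 1))"
    using mixture(2) unfolding G_def by simp
  finally show ?thesis by (simp add: S_def exp_minus divide_inverse mult.commute)
qed

(* Each factor of the Chernoff bound for p > k is at most 2 exp (2 lam C n / p^2), provided
   C = exp (lam + 1) and lam C <= k/2: the first mixture term has exponent a = lam C / p <= 1/2,
   where exp a - 1 <= 2a, and the second term is at most exp (- n / p) <= 1. *)
lemma mixture_factor_bound:
  assumes kp: "k < p" and k1: "k \<ge> 1" and lam: "lam \<ge> 0"
    and small: "lam * exp (lam + 1) \<le> real k / 2"
  defines "C \<equiv> exp (lam + 1)"
  shows "binom_mgf n p (lam * C / real p) + exp (- (C * real n / real p)) * binom_mgf n p (lam + 1)
         \<le> 2 * exp (2 * lam * C * real n / (real p)^2)"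
proof -
  have p1: "p \<ge> 1" and p0: "real p > 0" using kp k1 by auto
  have a0: "lam * C / real p \<ge> 0" using lam unfolding C_def by simp
  have ahalf: "lam * C / real p \<le> 1/2"
    using small kp p0 unfolding C_def by (simp add: field_simps)
  have "binom_mgf n p (lam * C / real p) \<le> exp (real n * ((exp (lam * C / real p) - 1) / real p))"
    by (rule binom_mgf_le_exp[OF p1])
  also have "\<dots> \<le> exp (real n * ((2 * (lam * C / real p)) / real p))"
    using real_exp_bound_lemma[OF a0 ahalf] p0
    by (intro exp_mono mult_left_mono divide_right_mono) auto
  also have "\<dots> = exp (2 * lam * C * real n / (real p)^2)"
    by (simp add: power2_eq_square field_simps)
  finally have first: "binom_mgf n p (lam * C / real p) \<le> exp (2 * lam * C * real n / (real p)^2)" .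
  have "exp (- (C * real n / real p)) * binom_mgf n p (lam + 1)
        \<le> exp (- (C * real n / real p)) * exp (real n * ((C - 1) / real p))"
    unfolding C_def by (intro mult_left_mono binom_mgf_le_exp[OF p1]) auto
  also have "\<dots> = exp (- (real n / real p))"
    using p0 by (simp add: exp_add[symmetric] field_simps)
  also have "\<dots> \<le> 1" using p0 by simp
  also have "1 \<le> exp (2 * lam * C * real n / (real p)^2)"
    using lam unfolding C_def by simp
  finally show ?thesis using first by linarith
qed

lemma eventually_lambda_small:
  "eventually (\<lambda>k::nat. ln (real k) / 8 * exp (ln (real k) / 8 + 1) \<le> real k / 2) sequentially"
proof -
  have "eventually (\<lambda>x::real. ln x / 8 * exp (ln x / 8 + 1) \<le> x / 2) at_top"
    by real_asymp
  then show ?thesis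
    using filterlim_real_sequentially by (rule eventually_compose_filterlim)
qed

(* Product of the factor bounds over S(k,n): at most 2^n from the factors 2 (there are at most
   n primes up to n) and exp n from the exponents, since sum_{p > k} 1/p^2 <= 1/k. *)
lemma prod_factor_bounds_le:
  fixes c :: real
  assumes k1: "k \<ge> 1" and c0: "0 \<le> c" and ck: "2 * c \<le> real k"
  shows "(\<Prod>p\<in>Sprimes k n. 2 * exp (2 * c * real n / (real p)^2)) \<le> 2 ^ n * exp (real n)"
proof -
  define S where "S = Sprimes k n"
  have fS: "finite S" unfolding S_def Sprimes_def by simp
  have "(\<Prod>p\<in>S. 2 * exp (2 * c * real n / (real p)^2))
        = 2 ^ card S * exp (real n * (2 * c * (\<Sum>p\<in>S. 1 / (real p)^2)))"
    using fS by (simp add: prod.distrib exp_sum[symmetric] sum_distrib_left mult_ac)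
  also have "\<dots> \<le> 2 ^ n * exp (real n * 1)"
  proof (intro mult_mono)
    have "card S \<le> card {1..n}" unfolding S_def Sprimes_def
      by (intro card_mono) (auto simp: prime_ge_1_nat)
    then show "(2::real) ^ card S \<le> 2 ^ n" by (intro power_increasing) auto
    have "(\<Sum>p\<in>S. 1 / (real p)^2) \<le> 1 / real k"
      using k1 fS by (intro sum_inverse_squares_le[where n=n]) (auto simp: S_def Sprimes_def)
    then have "2 * c * (\<Sum>p\<in>S. 1 / (real p)^2) \<le> 2 * c * (1 / real k)"
      using c0 by (intro mult_left_mono) auto
    also have "\<dots> \<le> real k * (1 / real k)"
      using ck by (intro mult_right_mono) auto
    also have "\<dots> = 1" using k1 by simp
    finally show "exp (real n * (2 * c * (\<Sum>p\<in>S. 1 / (real p)^2))) \<le> exp (real n * 1)"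
      by (intro exp_mono mult_left_mono) auto
  qed auto
  finally show ?thesis unfolding S_def by simp
qed

lemma big_event_exponential_bound:
  assumes tm: "tilde_model n M X" and n1: "n \<ge> 1" and k1: "k \<ge> 1"
    and small: "ln (real k) / 8 * exp (ln (real k) / 8 + 1) \<le> real k / 2"
  shows "measure M (big_event n k \<epsilon> M X) \<le> exp (real n * (ln 2 + 1 - \<epsilon> * (ln (real k) / 8)))"
proof -
  define lam where "lam = ln (real k) / 8"
  define C where "C = exp (lam + 1)"
  define S where "S = Sprimes k n"
  have lam0: "lam \<ge> 0" unfolding lam_def using k1 by simp
  have pS: "k < p" "p \<ge> 1" if "p \<in> S" for p using that k1 unfolding S_def Sprimes_def by auto
  have "measure M (big_event n k \<epsilon> M X) \<le> exp (- (lam * real n * \<epsilon>)) *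
          (\<Prod>p\<in>S. binom_mgf n p (lam * C / real p) + exp (- (C * real n / real p)) * binom_mgf n p (lam + 1))"
    unfolding S_def C_def using big_event_le_mixture_moment[OF tm n1 lam0] by simp
  also have "\<dots> \<le> exp (- (lam * real n * \<epsilon>)) * (\<Prod>p\<in>S. 2 * exp (2 * (lam * C) * real n / (real p)^2))"
    using mixture_factor_bound[OF _ k1 lam0] small binom_mgf_nonneg pS
    by (intro mult_left_mono prod_mono conjI add_nonneg_nonneg mult_nonneg_nonneg)
       (auto simp: C_def lam_def mult.assoc)
  also have "\<dots> \<le> exp (- (lam * real n * \<epsilon>)) * (2 ^ n * exp (real n))"
    using small lam0 unfolding S_def
    by (intro mult_left_mono prod_factor_bounds_le[OF k1]) (auto simp: C_def lam_def)
  also have "\<dots> = exp (real n * (ln 2 + 1 - \<epsilon> * lam))"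
  proof -
    have "(2::real) ^ n = exp (real n * ln 2)" by (simp add: exp_of_nat_mult)
    then show ?thesis by (simp add: exp_add[symmetric] field_simps)
  qed
  finally show ?thesis unfolding lam_def .
qed

(* Translating the probability bound into the normalized logarithm, including the case of
   probability zero where eln = -oo. *)
lemma eln_div_le:
  assumes "P \<ge> 0" "P \<le> exp (real n * (ln 2 + 1 - \<epsilon> * (ln (real k) / 8)))" "n \<ge> 1"
  shows "eln P / ereal (real n) \<le> ereal (- (\<epsilon> / 8) * ln (real k) + 4)"
proof (cases "P = 0")
  case True
  then show ?thesis using assms(3) by (simp add: eln_def divide_ereal_def)
next
  case False
  then have P0: "P > 0" using assms(1) by simp
  have nR: "real n > 0" using assms(3) by simp
  have "ln P \<le> real n * (ln 2 + 1 - \<epsilon> * (ln (real k) / 8))"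
    using assms(2) P0 by (metis ln_exp ln_mono exp_gt_zero)
  then have "ln P / real n \<le> ln 2 + 1 - \<epsilon> * (ln (real k) / 8)"
    using nR by (simp add: field_simps)
  also have "\<dots> \<le> - (\<epsilon> / 8) * ln (real k) + 4"
    using ln_2_less_1 by simp
  finally have "ln P / real n \<le> - (\<epsilon> / 8) * ln (real k) + 4" .
  moreover have "eln P / ereal (real n) = ereal (ln P / real n)"
    using False nR by (simp add: eln_def divide_ereal_def divide_inverse)
  ultimately show ?thesis by simp
qed

lemma limsup_limsup_eq_minf:
  fixes f :: "nat \<Rightarrow> nat \<Rightarrow> ereal" and g :: "nat \<Rightarrow> real"
  assumes bound: "eventually (\<lambda>k. eventually (\<lambda>n. f k n \<le> ereal (g k)) sequentially) sequentially"
    and g: "filterlim g at_bot sequentially"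
  shows "limsup (\<lambda>k. limsup (f k)) = -\<infinity>"
proof (rule ereal_bot)
  fix B :: real
  have "eventually (\<lambda>k. g k \<le> B) sequentially" using g by (simp add: filterlim_at_bot)
  with bound have "eventually (\<lambda>k. limsup (f k) \<le> ereal B) sequentially"
  proof eventually_elim
    case (elim k)
    then have "limsup (f k) \<le> ereal (g k)" by (intro Limsup_bounded)
    then show ?case using elim by (simp add: order_trans)
  qed
  then show "limsup (\<lambda>k. limsup (f k)) \<le> ereal B" by (rule Limsup_bounded)
qed

theorem theorem3p5:
  fixes \<epsilon> :: real
  assumes "\<epsilon> > 0"
  shows "(\<exists>K. \<forall>k\<ge>K. \<exists>N. \<forall>n\<ge>N. \<forall>(M::'a measure) X. tilde_model n M X \<longrightarrow>
            eln (measure M (big_event n k \<epsilon> M X)) / ereal (real n)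
              \<le> ereal (- (\<epsilon> / 8) * ln (real k) + 4))
       \<and> (\<forall>(Ms::nat \<Rightarrow> 'a measure) Xs. (\<forall>n\<ge>1. tilde_model n (Ms n) (Xs n)) \<longrightarrow>
            limsup (\<lambda>k. limsup (\<lambda>n. eln (measure (Ms n) (big_event n k \<epsilon> (Ms n) (Xs n)))
                                        / ereal (real n))) = -\<infinity>)"
proof -
  obtain K0 where K0: "\<And>k. k \<ge> K0 \<Longrightarrow> ln (real k) / 8 * exp (ln (real k) / 8 + 1) \<le> real k / 2"
    using eventually_lambda_small unfolding eventually_sequentially by blast
  define K where "K = max K0 1"
  have bound: "eln (measure M (big_event n k \<epsilon> M X)) / ereal (real n) \<le> ereal (- (\<epsilon> / 8) * ln (real k) + 4)"
    if "k \<ge> K" "n \<ge> 1" "tilde_model n M X" for k n and M :: "'a measure" and X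
    using that K0[of k] unfolding K_def
    by (intro eln_div_le big_event_exponential_bound) auto
  have part1: "\<exists>K. \<forall>k\<ge>K. \<exists>N. \<forall>n\<ge>N. \<forall>(M::'a measure) X. tilde_model n M X \<longrightarrow>
            eln (measure M (big_event n k \<epsilon> M X)) / ereal (real n) \<le> ereal (- (\<epsilon> / 8) * ln (real k) + 4)"
    using bound by blast
  have part2: "limsup (\<lambda>k. limsup (\<lambda>n. eln (measure (Ms n) (big_event n k \<epsilon> (Ms n) (Xs n)))
                                        / ereal (real n))) = -\<infinity>"
    if tm: "\<forall>n\<ge>1. tilde_model n (Ms n) (Xs n)" for Ms :: "nat \<Rightarrow> 'a measure" and Xs
  proof (rule limsup_limsup_eq_minf[where g="\<lambda>k. - (\<epsilon> / 8) * ln (real k) + 4"])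
    show "filterlim (\<lambda>k::nat. - (\<epsilon> / 8) * ln (real k) + 4) at_bot sequentially"
      using assms by real_asymp
    show "eventually (\<lambda>k. eventually (\<lambda>n. eln (measure (Ms n) (big_event n k \<epsilon> (Ms n) (Xs n)))
            / ereal (real n) \<le> ereal (- (\<epsilon> / 8) * ln (real k) + 4)) sequentially) sequentially"
      unfolding eventually_sequentially using bound tm by blast
  qed
  show ?thesis using part1 part2 by blast
qed

end
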